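(* Let $(\psi,\eta,\alpha)$ be a solution of the conformal solitary-wave problem (W1)–(W8) and let $v$ be its vertical velocity in conformal variables. If $v<0$ in $\Gamma^+\cup\mathcal R^+$, then $\eta_x<0$ in $\Gamma^+\cup\mathcal R^+$.
   Context: Standing setup: $\mathcal R=\{(x,y):0<y<1\}$, $\Gamma=\{y=1\}$, $B=\{y=0\}$, $\mathcal R^+=\mathcal R\cap\{x>0\}$, $\Gamma^+=\Gamma\cap\{x>0\}$, $\beta\in(0,1)$. $\gamma\in C^{2,1}_{\rm loc}(\mathbb R)$; $\psi_{\rm triv}''=-\gamma(\psi_{\rm triv})$ on $[0,1]$, $\psi_{\rm triv}(0)=0$, $\psi_{\rm triv}(1)=1$, $\psi_{\rm triv}'>0$ on $[0,1]$; $\mu=\psi_{\rm triv}'(1)^2$. Given $\alpha\in\mathbb R$, the problem for $(\psi,\eta)$ is: (W1) $\Delta\psi=-\gamma(\psi)|\nabla\eta|^2$ in $\mathcal R$; (W2) $\psi=1$ on $\Gamma$, $\psi=0$ on $B$; (W3) $\psi_y^2=(\mu-2\alpha(\eta-1))|\nabla\eta|^2$ on $\Gamma$; (W4) $\Delta\eta=0$ in $\mathcal R$, $\eta=0$ on $B$; (W5) $\psi(x,y)\to\psi_{\rm triv}(y)$, $\eta(x,y)\to y$ as $x\to\pm\infty$ uniformly in $y$; (W6) $\psi,\eta\in C^{3+\beta}_b(\overline{\mathcal R})$; (W7) $\psi,\eta$ even in $x$; (W8) $\inf_{\mathcal R}(\mu-2\alpha(\eta-1))|\nabla\eta|^2>0$.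 Velocity in conformal variables: $u=\dfrac{\psi_x\eta_x+\psi_y\eta_y}{\eta_x^2+\eta_y^2}$, $v=\dfrac{\psi_y\eta_x-\psi_x\eta_y}{\eta_x^2+\eta_y^2}$. *)

theory Defs
  imports "HOL-Analysis.Analysis"
begin

definition stripR :: "(real \<times> real) set" where
  "stripR = {(x, y). 0 < y \<and> y < 1}"

definition stripClosed :: "(real \<times> real) set" where
  "stripClosed = {(x, y). 0 \<le> y \<and> y \<le> 1}"

definition GammaSet :: "(real \<times> real) set" where
  "GammaSet = {(x, y). y = 1}"

definition BottomSet :: "(real \<times> real) set" where
  "BottomSet = {(x, y). y = 0}"

definition stripR_plus :: "(real \<times> real) set" where
  "stripR_plus = {(x, y). 0 < y \<and> y < 1 \<and> 0 < x}"

definition Gamma_plus :: "(real \<times> real) set" where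
  "Gamma_plus = {(x, y). y = 1 \<and> 0 < x}"

text \<open>Partial derivatives, taken as (one-sided on the boundary) derivatives
  within the closed strip; in the open strip they are ordinary partial derivatives.\<close>

definition pdx :: "((real \<times> real) \<Rightarrow> real) \<Rightarrow> (real \<times> real) \<Rightarrow> real" where
  "pdx f p = frechet_derivative f (at p within stripClosed) (1, 0)"

definition pdy :: "((real \<times> real) \<Rightarrow> real) \<Rightarrow> (real \<times> real) \<Rightarrow> real" where
  "pdy f p = frechet_derivative f (at p within stripClosed) (0, 1)"

definition lap :: "((real \<times> real) \<Rightarrow> real) \<Rightarrow> (real \<times> real) \<Rightarrow> real" where
  "lap f p = pdx (pdx f) p + pdy (pdy f) p"

definition gradsq :: "((real \<times> real) \<Rightarrow> real) \<Rightarrow> (real \<times> real) \<Rightarrow> real" where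
  "gradsq f p = (pdx f p)\<^sup>2 + (pdy f p)\<^sup>2"

fun Ckb :: "nat \<Rightarrow> ((real \<times> real) \<Rightarrow> real) \<Rightarrow> bool" where
  "Ckb 0 f = (continuous_on stripClosed f \<and> bounded (f ` stripClosed))"
| "Ckb (Suc k) f = (continuous_on stripClosed f \<and> bounded (f ` stripClosed)
      \<and> (\<forall>p\<in>stripClosed. f differentiable (at p within stripClosed))
      \<and> Ckb k (pdx f) \<and> Ckb k (pdy f))"

definition holder_on :: "real \<Rightarrow> (real \<times> real) set \<Rightarrow> ((real \<times> real) \<Rightarrow> real) \<Rightarrow> bool" where
  "holder_on b S g = (\<exists>C. \<forall>p\<in>S. \<forall>q\<in>S. \<bar>g p - g q\<bar> \<le> C * dist p q powr b)"

definition C3beta_b :: "real \<Rightarrow> ((real \<times> real) \<Rightarrow> real) \<Rightarrow> bool" where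
  "C3beta_b b f = (Ckb 3 f \<and>
     (\<forall>D1\<in>{pdx, pdy}. \<forall>D2\<in>{pdx, pdy}. \<forall>D3\<in>{pdx, pdy}.
        holder_on b stripClosed (D1 (D2 (D3 f)))))"

definition C21_loc :: "(real \<Rightarrow> real) \<Rightarrow> bool" where
  "C21_loc g = ((\<forall>t. g differentiable (at t)) \<and> (\<forall>t. deriv g differentiable (at t))
     \<and> (\<forall>a b. \<exists>L. \<forall>s\<in>{a..b}. \<forall>t\<in>{a..b}.
           \<bar>deriv (deriv g) s - deriv (deriv g) t\<bar> \<le> L * \<bar>s - t\<bar>))"

definition vel_u :: "((real \<times> real) \<Rightarrow> real) \<Rightarrow> ((real \<times> real) \<Rightarrow> real) \<Rightarrow> (real \<times> real) \<Rightarrow> real" where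
  "vel_u psi eta p = (pdx psi p * pdx eta p + pdy psi p * pdy eta p) / gradsq eta p"

definition vel_v :: "((real \<times> real) \<Rightarrow> real) \<Rightarrow> ((real \<times> real) \<Rightarrow> real) \<Rightarrow> (real \<times> real) \<Rightarrow> real" where
  "vel_v psi eta p = (pdy psi p * pdx eta p - pdx psi p * pdy eta p) / gradsq eta p"

text \<open>The conformal solitary-wave problem (W1)-(W8), for given gamma, trivial
  solution psit (with derivative psit'), mu and Hoelder exponent b.\<close>

definition solitary_wave ::
  "(real \<Rightarrow> real) \<Rightarrow> (real \<Rightarrow> real) \<Rightarrow> real \<Rightarrow> real \<Rightarrow>
   ((real \<times> real) \<Rightarrow> real) \<Rightarrow> ((real \<times> real) \<Rightarrow> real) \<Rightarrow> real \<Rightarrow> bool" where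
  "solitary_wave gam psit mu b psi eta alpha =
     ((\<forall>p\<in>stripR. lap psi p = - gam (psi p) * gradsq eta p)
    \<and> (\<forall>p\<in>GammaSet. psi p = 1) \<and> (\<forall>p\<in>BottomSet. psi p = 0)
    \<and> (\<forall>p\<in>GammaSet. (pdy psi p)\<^sup>2 = (mu - 2 * alpha * (eta p - 1)) * gradsq eta p)
    \<and> (\<forall>p\<in>stripR. lap eta p = 0) \<and> (\<forall>p\<in>BottomSet. eta p = 0)
    \<and> (\<forall>e>0. \<exists>M. \<forall>x y. M \<le> \<bar>x\<bar> \<and> 0 \<le> y \<and> y \<le> 1 \<longrightarrow>
          \<bar>psi (x, y) - psit y\<bar> < e \<and> \<bar>eta (x, y) - y\<bar> < e)
    \<and> C3beta_b b psi \<and> C3beta_b b eta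
    \<and> (\<forall>x y. (x, y) \<in> stripClosed \<longrightarrow> psi (- x, y) = psi (x, y) \<and> eta (- x, y) = eta (x, y))
    \<and> (\<exists>c>0. \<forall>p\<in>stripR. c \<le> (mu - 2 * alpha * (eta p - 1)) * gradsq eta p))"

end

theory Submission
  imports Defs
begin

(* On the top boundary psi = 1, so psi_x = 0 and v = psi_y eta_x / |grad eta|^2 there; hence v < 0
   gives psi_y eta_x < 0 on Gamma+. Far out psi is close to psi_triv, whose slope at y = 1 is positive,
   so a second-order Taylor bound in y forces psi_y > 0 at far points of the top. As psi_y never
   vanishes on Gamma+, it is positive there and eta_x < 0 on Gamma+.
   For h > 0 the difference eta(x+h,y) - eta(x-h,y) is harmonic in the quarter strip, vanishes on
   x = 0 (evenness) and on the bottom, is nonpositive on the top (eta decreases there) and tends to 0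
   at infinity, so by the maximum principle it is nonpositive. Adding a multiple of the harmonic
   barrier sin(k(x-a)) sinh(ky), calibrated by a uniform bound eta_x <= -m on the top, and applying
   the maximum principle on a rectangle improves this to a bound -2hc with c > 0; letting h -> 0
   gives eta_x <= -c < 0 in the interior. *)

section \<open>One-variable calculus\<close>

lemma first_order_taylor_bound:
  fixes g g' g'' :: "real \<Rightarrow> real"
  assumes "a < b"
    and g': "\<And>t. t \<in> {a..b} \<Longrightarrow> (g has_real_derivative g' t) (at t within {a..b})"
    and g'': "\<And>t. t \<in> {a..b} \<Longrightarrow> (g' has_real_derivative g'' t) (at t within {a..b})"
    and bound: "\<And>t. t \<in> {a..b} \<Longrightarrow> \<bar>g'' t\<bar> \<le> C"
  shows "\<bar>g b - g a - (b - a) * g' b\<bar> \<le> C * (b - a)\<^sup>2"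
proof -
  obtain z where z: "z \<in> {a<..<b}" "g b - g a = g' z * (b - a)"
    using mvt_simple[OF \<open>a < b\<close>, of g "\<lambda>t. (*) (g' t)"] g' by (auto simp: has_field_derivative_def)
  have "(g' has_real_derivative g'' t) (at t within {z..b})" if "t \<in> {z..b}" for t
    using z that by (intro DERIV_subset[OF g'']) auto
  then obtain w where w: "w \<in> {z<..<b}" "g' b - g' z = g'' w * (b - z)"
    using mvt_simple[of z b g' "\<lambda>t. (*) (g'' t)"] z by (auto simp: has_field_derivative_def)
  have "\<bar>g' b - g' z\<bar> \<le> C * (b - a)"
    using w z bound[of w] by (auto simp: abs_mult intro!: mult_mono)
  then have "(b - a) * \<bar>g' b - g' z\<bar> \<le> (b - a) * (C * (b - a))"
    using \<open>a < b\<close> by (intro mult_left_mono) auto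
  moreover have "g b - g a - (b - a) * g' b = (b - a) * (g' z - g' b)"
    using z by (simp add: algebra_simps)
  then have "\<bar>g b - g a - (b - a) * g' b\<bar> = (b - a) * \<bar>g' b - g' z\<bar>"
    using \<open>a < b\<close> by (simp add: abs_mult abs_minus_commute)
  ultimately show ?thesis by (simp add: power2_eq_square mult.commute mult.left_commute)
qed

lemma DERIV2_local_max_nonpos:
  fixes g g' :: "real \<Rightarrow> real"
  assumes "r > 0"
    and g': "\<And>t. \<bar>t - t0\<bar> < r \<Longrightarrow> (g has_real_derivative g' t) (at t)"
    and g'': "(g' has_real_derivative A) (at t0)"
    and max: "\<And>t. \<bar>t - t0\<bar> < r \<Longrightarrow> g t \<le> g t0"
  shows "A \<le> 0"
proof (rule ccontr)
  assume "\<not> A \<le> 0"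
  then obtain d where d: "d > 0" "\<And>h. h > 0 \<Longrightarrow> h < d \<Longrightarrow> g' t0 < g' (t0 + h)"
    using DERIV_pos_inc_right[OF g''] by auto
  have crit: "g' t0 = 0"
    using DERIV_local_max[OF g'[of t0] \<open>r > 0\<close>] max \<open>r > 0\<close> by (simp add: abs_minus_commute)
  define h where "h = min d r / 2"
  have h: "0 < h" "h < d" "h < r" using d \<open>r > 0\<close> by (auto simp: h_def)
  obtain z where z: "t0 < z" "z < t0 + h" "g (t0 + h) - g t0 = h * g' z"
    using MVT2[of t0 "t0 + h" g g'] g' h by auto
  have "g' z > 0" using d(2)[of "z - t0"] z h crit by auto
  then have "g (t0 + h) > g t0" using z h by (simp add: algebra_simps)
  moreover have "g (t0 + h) \<le> g t0" using max h by auto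
  ultimately show False by simp
qed

lemma tendsto_symmetric_difference_quotient:
  fixes g :: "real \<Rightarrow> real"
  assumes "DERIV g x :> L"
  shows "((\<lambda>h. (g (x + h) - g (x - h)) / (2 * h)) \<longlongrightarrow> L) (at 0)"
proof -
  have right: "((\<lambda>h. (g (x + h) - g x) / h) \<longlongrightarrow> L) (at 0)"
    using assms by (simp add: DERIV_def)
  have "DERIV (\<lambda>t. g (- t)) (- x) :> - L"
    using DERIV_mirror[of g L "- x"] assms by simp
  then have left: "((\<lambda>h. (g (x - h) - g x) / h) \<longlongrightarrow> - L) (at 0)"
    by (simp add: DERIV_def)
  have "((\<lambda>h. ((g (x + h) - g x) / h - (g (x - h) - g x) / h) / 2) \<longlongrightarrow> (L - - L) / 2) (at 0)"
    by (intro tendsto_intros right left) simp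
  moreover have "(\<lambda>h. ((g (x + h) - g x) / h - (g (x - h) - g x) / h) / 2)
      = (\<lambda>h. (g (x + h) - g (x - h)) / (2 * h))"
    by (rule ext) (simp add: field_simps diff_divide_distrib)
  ultimately show ?thesis by simp
qed

lemma DERIV_le_if_symmetric_difference_le:
  fixes g :: "real \<Rightarrow> real"
  assumes "DERIV g x :> L" "d > 0"
    and le: "\<And>h. 0 < h \<Longrightarrow> h < d \<Longrightarrow> g (x + h) - g (x - h) \<le> 2 * h * B"
  shows "L \<le> B"
proof (rule tendsto_upperbound)
  show "((\<lambda>h. (g (x + h) - g (x - h)) / (2 * h)) \<longlongrightarrow> L) (at_right 0)"
    using tendsto_symmetric_difference_quotient[OF assms(1)] by (rule tendsto_mono[OF at_le, rotated]) simp
  show "\<forall>\<^sub>F h in at_right 0. (g (x + h) - g (x - h)) / (2 * h) \<le> B"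
    using \<open>d > 0\<close> le by (intro eventually_at_rightI[of 0 d]) (auto simp: divide_le_eq mult.commute)
qed simp

lemma even_antimono_symmetric_difference_nonpos:
  fixes g :: "real \<Rightarrow> real"
  assumes even: "\<And>t. g (- t) = g t"
    and antimono: "\<And>s t. 0 \<le> s \<Longrightarrow> s \<le> t \<Longrightarrow> g t \<le> g s"
    and "0 \<le> x" "0 \<le> h"
  shows "g (x + h) \<le> g (x - h)"
proof (cases "h \<le> x")
  case True
  then show ?thesis using antimono[of "x - h" "x + h"] \<open>0 \<le> h\<close> by simp
next
  case False
  then show ?thesis using antimono[of "h - x" "x + h"] even[of "h - x"] \<open>0 \<le> x\<close> by simp
qed

lemma symmetric_difference_le_if_DERIV_le:
  fixes g g' :: "real \<Rightarrow> real"
  assumes "0 < h"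
    and g': "\<And>t. x - h \<le> t \<Longrightarrow> t \<le> x + h \<Longrightarrow> (g has_real_derivative g' t) (at t)"
    and le: "\<And>t. x - h \<le> t \<Longrightarrow> t \<le> x + h \<Longrightarrow> g' t \<le> B"
  shows "g (x + h) - g (x - h) \<le> 2 * h * B"
proof -
  obtain z where z: "x - h < z" "z < x + h" "g (x + h) - g (x - h) = (x + h - (x - h)) * g' z"
    using MVT2[of "x - h" "x + h" g g'] g' \<open>0 < h\<close> by auto
  have "(2 * h) * g' z \<le> (2 * h) * B"
    using le[of z] z \<open>0 < h\<close> by (intro mult_left_mono) auto
  with z(3) show ?thesis by simp
qed

lemma continuous_on_Icc_pos_lower_bound:
  fixes f :: "real \<Rightarrow> real"
  assumes "continuous_on {a..b} f" "\<And>t. t \<in> {a..b} \<Longrightarrow> 0 < f t"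
  obtains m where "m > 0" "\<And>t. t \<in> {a..b} \<Longrightarrow> m \<le> f t"
proof (cases "a \<le> b")
  case True
  then obtain t0 where "t0 \<in> {a..b}" "\<And>t. t \<in> {a..b} \<Longrightarrow> f t0 \<le> f t"
    using continuous_attains_inf[OF compact_Icc _ assms(1)] by auto
  with assms(2) show ?thesis by (intro that[of "f t0"]) auto
next
  case False
  then show ?thesis by (intro that[of 1]) auto
qed

section \<open>Partial derivatives on the strip\<close>

lemma Ckb_SucD: "Ckb (Suc k) f \<Longrightarrow> Ckb k f"
proof (induction k arbitrary: f)
  case 0
  then show ?case by simp
next
  case (Suc k)
  then show ?case by (metis Ckb.simps(2))
qed

lemma Ckb_2_D:
  assumes "Ckb 2 f"
  shows "continuous_on stripClosed f" "continuous_on stripClosed (pdx f)" "continuous_on stripClosed (pdy f)"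
    and "p \<in> stripClosed \<Longrightarrow> f differentiable (at p within stripClosed)"
    and "p \<in> stripClosed \<Longrightarrow> pdx f differentiable (at p within stripClosed)"
    and "p \<in> stripClosed \<Longrightarrow> pdy f differentiable (at p within stripClosed)"
    and "bounded (pdy (pdy f) ` stripClosed)"
  using assms by (simp_all add: numeral_2_eq_2)

lemma frechet_derivative_axis:
  assumes "f differentiable (at p within stripClosed)"
  shows "frechet_derivative f (at p within stripClosed) (h, 0) = pdx f p * h"
    and "frechet_derivative f (at p within stripClosed) (0, h) = pdy f p * h"
proof -
  have "linear (frechet_derivative f (at p within stripClosed))"
    using assms by (simp add: frechet_derivative_works has_derivative_linear)
  from linear.scaleR[OF this, of h "(1, 0)"] linear.scaleR[OF this, of h "(0, 1)"]
  show "frechet_derivative f (at p within stripClosed) (h, 0) = pdx f p * h"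
    and "frechet_derivative f (at p within stripClosed) (0, h) = pdy f p * h"
    by (simp_all add: pdx_def pdy_def mult.commute)
qed

lemma has_real_derivative_pdx:
  assumes "f differentiable (at (x, y) within stripClosed)" "0 \<le> y" "y \<le> 1"
  shows "((\<lambda>t. f (t, y)) has_real_derivative pdx f (x, y)) (at x)"
proof -
  have line: "((\<lambda>t. (t, y)) has_derivative (\<lambda>h. (h, 0))) (at x)"
    by (auto intro!: derivative_eq_intros)
  have "(f has_derivative frechet_derivative f (at (x, y) within stripClosed))
      (at (x, y) within (\<lambda>t. (t, y)) ` UNIV)"
    using assms by (intro has_derivative_subset[OF iffD1[OF frechet_derivative_works]])
      (auto simp: stripClosed_def)
  from has_derivative_in_compose[OF line this] show ?thesis
    using assms(1) by (simp add: has_field_derivative_def frechet_derivative_axis)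
qed

lemma has_real_derivative_pdy:
  assumes "f differentiable (at (x, y) within stripClosed)" "0 \<le> y" "y \<le> 1"
  shows "((\<lambda>s. f (x, s)) has_real_derivative pdy f (x, y)) (at y within {0..1})"
proof -
  have line: "((\<lambda>s. (x, s)) has_derivative (\<lambda>h. (0, h))) (at y within {0..1})"
    by (auto intro!: derivative_eq_intros)
  have "(f has_derivative frechet_derivative f (at (x, y) within stripClosed))
      (at (x, y) within (\<lambda>s. (x, s)) ` {0..1})"
    using assms by (intro has_derivative_subset[OF iffD1[OF frechet_derivative_works]])
      (auto simp: stripClosed_def)
  from has_derivative_in_compose[OF line this] show ?thesis
    using assms(1) by (simp add: has_field_derivative_def frechet_derivative_axis)
qed

lemma has_real_derivative_pdy_interior:
  assumes "f differentiable (at (x, y) within stripClosed)" "0 < y" "y < 1"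
  shows "((\<lambda>s. f (x, s)) has_real_derivative pdy f (x, y)) (at y)"
  using has_real_derivative_pdy[OF assms(1)] assms(2,3) at_within_Icc_at[of 0 y 1] by simp

section \<open>Maximum principle on rectangles\<close>

lemma rectangle_max_principle_strict:
  fixes u ux uy uxx uyy :: "real \<Rightarrow> real \<Rightarrow> real"
  assumes cont: "continuous_on ({a..b} \<times> {c..d}) (\<lambda>(x, y). u x y)"
    and ux: "\<And>x y. a < x \<Longrightarrow> x < b \<Longrightarrow> c < y \<Longrightarrow> y < d \<Longrightarrow>
      ((\<lambda>t. u t y) has_real_derivative ux x y) (at x)"
    and uxx: "\<And>x y. a < x \<Longrightarrow> x < b \<Longrightarrow> c < y \<Longrightarrow> y < d \<Longrightarrow>
      ((\<lambda>t. ux t y) has_real_derivative uxx x y) (at x)"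
    and uy: "\<And>x y. a < x \<Longrightarrow> x < b \<Longrightarrow> c < y \<Longrightarrow> y < d \<Longrightarrow>
      ((\<lambda>s. u x s) has_real_derivative uy x y) (at y)"
    and uyy: "\<And>x y. a < x \<Longrightarrow> x < b \<Longrightarrow> c < y \<Longrightarrow> y < d \<Longrightarrow>
      ((\<lambda>s. uy x s) has_real_derivative uyy x y) (at y)"
    and subharmonic: "\<And>x y. a < x \<Longrightarrow> x < b \<Longrightarrow> c < y \<Longrightarrow> y < d \<Longrightarrow> uxx x y + uyy x y > 0"
    and boundary: "\<And>x y. x \<in> {a..b} \<Longrightarrow> y \<in> {c..d} \<Longrightarrow> x = a \<or> x = b \<or> y = c \<or> y = d \<Longrightarrow>
      u x y \<le> M"
    and "x \<in> {a..b}" "y \<in> {c..d}"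
  shows "u x y \<le> M"
proof -
  obtain q where q: "q \<in> {a..b} \<times> {c..d}"
      "\<And>z. z \<in> {a..b} \<times> {c..d} \<Longrightarrow> case_prod u z \<le> case_prod u q"
    using continuous_attains_sup[OF compact_Times[OF compact_Icc compact_Icc] _ cont] assms(8,9) by blast
  obtain x0 y0 where [simp]: "q = (x0, y0)" by force
  have "u x0 y0 \<le> M"
  proof (cases "x0 = a \<or> x0 = b \<or> y0 = c \<or> y0 = d")
    case True
    then show ?thesis using boundary q(1) by simp
  next
    case False
    then have i: "a < x0" "x0 < b" "c < y0" "y0 < d" using q(1) by auto
    define r where "r = min (min (x0 - a) (b - x0)) (min (y0 - c) (d - y0))"
    have "r > 0" using i by (simp add: r_def)
    have near: "a < t \<and> t < b" "c < s \<and> s < d" if "\<bar>t - x0\<bar> < r" "\<bar>s - y0\<bar> < r" for t s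
      using that by (auto simp: r_def abs_less_iff)
    have "uxx x0 y0 \<le> 0"
    proof (rule DERIV2_local_max_nonpos[OF \<open>r > 0\<close>])
      show "((\<lambda>t. u t y0) has_real_derivative ux t y0) (at t)" if "\<bar>t - x0\<bar> < r" for t
        using near[OF that, of y0] i \<open>r > 0\<close> by (intro ux) auto
      show "u t y0 \<le> u x0 y0" if "\<bar>t - x0\<bar> < r" for t
        using near[OF that, of y0] i \<open>r > 0\<close> q(2)[of "(t, y0)"] by auto
    qed (use uxx i in auto)
    moreover have "uyy x0 y0 \<le> 0"
    proof (rule DERIV2_local_max_nonpos[OF \<open>r > 0\<close>])
      show "((\<lambda>s. u x0 s) has_real_derivative uy x0 s) (at s)" if "\<bar>s - y0\<bar> < r" for s
        using near[OF _ that, of x0] i \<open>r > 0\<close> by (intro uy) auto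
      show "u x0 s \<le> u x0 y0" if "\<bar>s - y0\<bar> < r" for s
        using near[OF _ that, of x0] i \<open>r > 0\<close> q(2)[of "(x0, s)"] by auto
    qed (use uyy i in auto)
    ultimately show ?thesis using subharmonic[OF i] by simp
  qed
  with q(2)[of "(x, y)"] assms(8,9) show ?thesis by simp
qed

lemma rectangle_max_principle:
  fixes w wx wy wxx wyy :: "real \<Rightarrow> real \<Rightarrow> real"
  assumes cont: "continuous_on ({a..b} \<times> {c..d}) (\<lambda>(x, y). w x y)"
    and wx: "\<And>x y. a < x \<Longrightarrow> x < b \<Longrightarrow> c < y \<Longrightarrow> y < d \<Longrightarrow>
      ((\<lambda>t. w t y) has_real_derivative wx x y) (at x)"
    and wxx: "\<And>x y. a < x \<Longrightarrow> x < b \<Longrightarrow> c < y \<Longrightarrow> y < d \<Longrightarrow>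
      ((\<lambda>t. wx t y) has_real_derivative wxx x y) (at x)"
    and wy: "\<And>x y. a < x \<Longrightarrow> x < b \<Longrightarrow> c < y \<Longrightarrow> y < d \<Longrightarrow>
      ((\<lambda>s. w x s) has_real_derivative wy x y) (at y)"
    and wyy: "\<And>x y. a < x \<Longrightarrow> x < b \<Longrightarrow> c < y \<Longrightarrow> y < d \<Longrightarrow>
      ((\<lambda>s. wy x s) has_real_derivative wyy x y) (at y)"
    and harmonic: "\<And>x y. a < x \<Longrightarrow> x < b \<Longrightarrow> c < y \<Longrightarrow> y < d \<Longrightarrow> wxx x y + wyy x y = 0"
    and boundary: "\<And>x y. x \<in> {a..b} \<Longrightarrow> y \<in> {c..d} \<Longrightarrow> x = a \<or> x = b \<or> y = c \<or> y = d \<Longrightarrow>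
      w x y \<le> M"
    and xy: "x \<in> {a..b}" "y \<in> {c..d}"
  shows "w x y \<le> M"
proof (rule field_le_epsilon)
  fix e :: real
  assume "0 < e"
  define \<delta> where "\<delta> = e / (1 + (d - c)\<^sup>2)"
  have "1 + (d - c)\<^sup>2 > 0" by (simp add: add_pos_nonneg)
  then have "\<delta> > 0" "\<delta> * (1 + (d - c)\<^sup>2) = e" using \<open>0 < e\<close> by (simp_all add: \<delta>_def)
  have bound: "\<delta> * (y - c)\<^sup>2 \<le> e" if "y \<in> {c..d}" for y
  proof -
    have "(y - c)\<^sup>2 \<le> (d - c)\<^sup>2" using that by (intro power_mono) auto
    then have "\<delta> * (y - c)\<^sup>2 \<le> \<delta> * (1 + (d - c)\<^sup>2)"
      using \<open>\<delta> > 0\<close> by (intro mult_left_mono) auto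
    also have "\<dots> = e" by fact
    finally show ?thesis .
  qed
  have "w x y + \<delta> * (y - c)\<^sup>2 \<le> M + e"
  proof (rule rectangle_max_principle_strict[where u = "\<lambda>x y. w x y + \<delta> * (y - c)\<^sup>2"
        and ux = wx and uxx = wxx and uy = "\<lambda>x y. wy x y + \<delta> * (2 * (y - c))"
        and uyy = "\<lambda>x y. wyy x y + 2 * \<delta>"])
    show "continuous_on ({a..b} \<times> {c..d}) (\<lambda>(x, y). w x y + \<delta> * (y - c)\<^sup>2)"
      using cont by (auto intro!: continuous_intros simp: split_beta)
    show "((\<lambda>s. w x s + \<delta> * (s - c)\<^sup>2) has_real_derivative wy x y + \<delta> * (2 * (y - c))) (at y)"
      if "a < x" "x < b" "c < y" "y < d" for x y
      using wy[OF that] by (auto intro!: derivative_eq_intros)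
    show "((\<lambda>s. wy x s + \<delta> * (2 * (s - c))) has_real_derivative wyy x y + 2 * \<delta>) (at y)"
      if "a < x" "x < b" "c < y" "y < d" for x y
      using wyy[OF that] by (auto intro!: derivative_eq_intros)
    show "((\<lambda>t. w t y + \<delta> * (y - c)\<^sup>2) has_real_derivative wx x y) (at x)"
      if "a < x" "x < b" "c < y" "y < d" for x y
      using wx[OF that] by (auto intro!: derivative_eq_intros)
    show "wxx x y + (wyy x y + 2 * \<delta>) > 0" if "a < x" "x < b" "c < y" "y < d" for x y
      using harmonic[OF that] \<open>\<delta> > 0\<close> by simp
    show "w x y + \<delta> * (y - c)\<^sup>2 \<le> M + e"
      if "x \<in> {a..b}" "y \<in> {c..d}" "x = a \<or> x = b \<or> y = c \<or> y = d" for x y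
      using boundary[OF that] bound[OF that(2)] by simp
  qed (use wxx xy in auto)
  moreover have "0 \<le> \<delta> * (y - c)\<^sup>2" using \<open>\<delta> > 0\<close> by simp
  ultimately show "w x y \<le> M + e" by simp
qed

lemma harmonic_difference_barrier_max_principle:
  fixes eta :: "real \<times> real \<Rightarrow> real"
  assumes eta: "Ckb 2 eta" and harmonic: "\<forall>p\<in>stripR. lap eta p = 0"
    and boundary: "\<And>x y. x \<in> {a..b} \<Longrightarrow> y \<in> {0..1} \<Longrightarrow> x = a \<or> x = b \<or> y = 0 \<or> y = 1 \<Longrightarrow>
      eta (x + h, y) - eta (x - h, y) + \<epsilon> * (sin (k * (x - a)) * sinh (k * y)) \<le> M"
    and "x \<in> {a..b}" "y \<in> {0..1}"
  shows "eta (x + h, y) - eta (x - h, y) + \<epsilon> * (sin (k * (x - a)) * sinh (k * y)) \<le> M"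
proof -
  have shifted_x: "((\<lambda>t. f (t + c, y)) has_real_derivative pdx f (x + c, y)) (at x)"
    if "f \<in> {eta, pdx eta}" "0 \<le> y" "y \<le> 1" for f c x y
  proof -
    have "f differentiable (at (x + c, y) within stripClosed)"
      using that Ckb_2_D(4,5)[OF eta] by (auto simp: stripClosed_def)
    from DERIV_shift[THEN iffD1, OF has_real_derivative_pdx[OF this that(2,3)]]
    show ?thesis by (simp add: add.commute)
  qed
  have shifted_y: "((\<lambda>s. f (x + c, s)) has_real_derivative pdy f (x + c, y)) (at y)"
    if "f \<in> {eta, pdy eta}" "0 < y" "y < 1" for f c x y
    using that Ckb_2_D(4,6)[OF eta]
    by (intro has_real_derivative_pdy_interior) (auto simp: stripClosed_def)
  let ?w = "\<lambda>x y. eta (x + h, y) - eta (x - h, y) + \<epsilon> * (sin (k * (x - a)) * sinh (k * y))"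
  have "?w x y \<le> M"
  proof (rule rectangle_max_principle[where w = ?w and c = 0 and d = 1
      and wx = "\<lambda>x y. pdx eta (x + h, y) - pdx eta (x - h, y) + \<epsilon> * (k * cos (k * (x - a)) * sinh (k * y))"
      and wxx = "\<lambda>x y. pdx (pdx eta) (x + h, y) - pdx (pdx eta) (x - h, y)
        - \<epsilon> * (k * k * sin (k * (x - a)) * sinh (k * y))"
      and wy = "\<lambda>x y. pdy eta (x + h, y) - pdy eta (x - h, y) + \<epsilon> * (sin (k * (x - a)) * (k * cosh (k * y)))"
      and wyy = "\<lambda>x y. pdy (pdy eta) (x + h, y) - pdy (pdy eta) (x - h, y)
        + \<epsilon> * (sin (k * (x - a)) * (k * k * sinh (k * y)))"])
    have "continuous_on ({a..b} \<times> {0..1}) (\<lambda>p. eta (fst p + c, snd p))" for c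
      by (rule continuous_on_compose2[OF Ckb_2_D(1)[OF eta]])
        (auto intro!: continuous_intros simp: stripClosed_def)
    from this[of h] this[of "- h"] show "continuous_on ({a..b} \<times> {0..1}) (\<lambda>(x, y). ?w x y)"
      by (auto intro!: continuous_intros simp: split_beta)
    fix x y :: real
    assume "a < x" "x < b" "0 < y" "y < 1"
    then have y: "0 < y" "y < 1" "0 \<le> y" "y \<le> 1" by auto
    note dx = shifted_x[OF _ y(3,4)] and dy = shifted_y[OF _ y(1,2)]
    show "((\<lambda>t. ?w t y) has_real_derivative (pdx eta (x + h, y) - pdx eta (x - h, y)
          + \<epsilon> * (k * cos (k * (x - a)) * sinh (k * y)))) (at x)"
      using dx[where f = eta and c = h] dx[where f = eta and c = "- h"] by (auto intro!: derivative_eq_intros)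
    show "((\<lambda>t. pdx eta (t + h, y) - pdx eta (t - h, y) + \<epsilon> * (k * cos (k * (t - a)) * sinh (k * y)))
        has_real_derivative (pdx (pdx eta) (x + h, y) - pdx (pdx eta) (x - h, y)
          - \<epsilon> * (k * k * sin (k * (x - a)) * sinh (k * y)))) (at x)"
      using dx[where f = "pdx eta" and c = h] dx[where f = "pdx eta" and c = "- h"] by (auto intro!: derivative_eq_intros)
    show "((\<lambda>s. ?w x s) has_real_derivative (pdy eta (x + h, y) - pdy eta (x - h, y)
          + \<epsilon> * (sin (k * (x - a)) * (k * cosh (k * y))))) (at y)"
      using dy[where f = eta and c = h] dy[where f = eta and c = "- h"] by (auto intro!: derivative_eq_intros)
    show "((\<lambda>s. pdy eta (x + h, s) - pdy eta (x - h, s) + \<epsilon> * (sin (k * (x - a)) * (k * cosh (k * s))))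
        has_real_derivative (pdy (pdy eta) (x + h, y) - pdy (pdy eta) (x - h, y)
          + \<epsilon> * (sin (k * (x - a)) * (k * k * sinh (k * y))))) (at y)"
      using dy[where f = "pdy eta" and c = h] dy[where f = "pdy eta" and c = "- h"] by (auto intro!: derivative_eq_intros)
    have "lap eta (x + h, y) = 0" "lap eta (x - h, y) = 0"
      using harmonic y by (auto simp: stripR_def)
    then show "pdx (pdx eta) (x + h, y) - pdx (pdx eta) (x - h, y) - \<epsilon> * (k * k * sin (k * (x - a)) * sinh (k * y))
        + (pdy (pdy eta) (x + h, y) - pdy (pdy eta) (x - h, y) + \<epsilon> * (sin (k * (x - a)) * (k * k * sinh (k * y))))
        = 0"
      by (simp add: lap_def algebra_simps)
  qed (use assms in auto)
  then show ?thesis .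
qed

section \<open>Monotonicity of eta\<close>

lemma vel_v_on_top:
  assumes "psi differentiable (at (x, 1) within stripClosed)" and top: "\<And>t. psi (t, 1) = 1"
  shows "vel_v psi eta (x, 1) = pdy psi (x, 1) * pdx eta (x, 1) / gradsq eta (x, 1)"
proof -
  have "((\<lambda>t. psi (t, 1)) has_real_derivative pdx psi (x, 1)) (at x)"
    using has_real_derivative_pdx[OF assms(1)] by simp
  then have "pdx psi (x, 1) = 0"
    unfolding top by (rule DERIV_unique[OF _ DERIV_const])
  then show ?thesis by (simp add: vel_v_def)
qed

lemma top_taylor_lower_bound:
  assumes psi: "Ckb 2 psi" and top: "\<And>x. psi (x, 1) = 1"
    and C: "\<And>p. p \<in> stripClosed \<Longrightarrow> \<bar>pdy (pdy psi) p\<bar> \<le> C"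
    and "pdy psi (x, 1) \<le> 0" "0 < h" "h \<le> 1"
  shows "psi (x, 1 - h) \<ge> 1 - C * h\<^sup>2"
proof -
  have "\<bar>psi (x, 1) - psi (x, 1 - h) - (1 - (1 - h)) * pdy psi (x, 1)\<bar> \<le> C * (1 - (1 - h))\<^sup>2"
  proof (rule first_order_taylor_bound[where g'' = "\<lambda>s. pdy (pdy psi) (x, s)"])
    show "((\<lambda>s. psi (x, s)) has_real_derivative pdy psi (x, t)) (at t within {1 - h..1})"
      and "((\<lambda>s. pdy psi (x, s)) has_real_derivative pdy (pdy psi) (x, t)) (at t within {1 - h..1})"
      and "\<bar>pdy (pdy psi) (x, t)\<bar> \<le> C"
      if "t \<in> {1 - h..1}" for t
      using that \<open>h \<le> 1\<close> Ckb_2_D(4,6)[OF psi, of "(x, t)"] C[of "(x, t)"]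
      by (auto simp: stripClosed_def intro!: DERIV_subset[OF has_real_derivative_pdy])
  qed (use \<open>0 < h\<close> in simp)
  moreover have "h * pdy psi (x, 1) \<le> 0"
    using \<open>pdy psi (x, 1) \<le> 0\<close> \<open>0 < h\<close> by (simp add: mult_nonneg_nonpos)
  ultimately show ?thesis
    using top[of x] by (simp add: abs_le_iff)
qed

lemma eventually_pdy_pos_on_top:
  fixes psi :: "real \<times> real \<Rightarrow> real" and psit psit' :: "real \<Rightarrow> real"
  assumes psi: "Ckb 2 psi" and top: "\<And>x. psi (x, 1) = 1"
    and far: "\<forall>e>0. \<exists>M. \<forall>x y. M \<le> \<bar>x\<bar> \<and> 0 \<le> y \<and> y \<le> 1 \<longrightarrow> \<bar>psi (x, y) - psit y\<bar> < e"
    and psit': "\<And>t. t \<in> {0..1} \<Longrightarrow> (psit has_real_derivative psit' t) (at t within {0..1})"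
    and "psit 1 = 1" "continuous_on {0..1} psit'" "\<And>t. t \<in> {0..1} \<Longrightarrow> psit' t > 0"
  shows "eventually (\<lambda>x. pdy psi (x, 1) > 0) at_top"
proof -
  obtain B where B: "\<And>p. p \<in> stripClosed \<Longrightarrow> \<bar>pdy (pdy psi) p\<bar> \<le> B"
    using Ckb_2_D(7)[OF psi] unfolding bounded_real by blast
  obtain C where C: "C > 0" "\<And>p. p \<in> stripClosed \<Longrightarrow> \<bar>pdy (pdy psi) p\<bar> \<le> C"
    using B by (intro that[of "\<bar>B\<bar> + 1"]) force+
  obtain m where m: "m > 0" "\<And>t. t \<in> {0..1} \<Longrightarrow> m \<le> psit' t"
    using continuous_on_Icc_pos_lower_bound[OF \<open>continuous_on {0..1} psit'\<close>] assms(7) by auto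
  define h where "h = min 1 (m / (2 * C))"
  have h: "0 < h" "h \<le> 1" "C * h \<le> m / 2"
    using m C by (auto simp: h_def min_def field_simps)
  have psit_below: "psit (1 - h) \<le> 1 - h * m"
  proof -
    have "(psit has_real_derivative psit' t) (at t within {1 - h..1})" if "t \<in> {1 - h..1}" for t
      using that h by (intro DERIV_subset[OF psit']) auto
    then obtain z where z: "z \<in> {1 - h<..<1}" "psit 1 - psit (1 - h) = psit' z * h"
      using mvt_simple[of "1 - h" 1 psit "\<lambda>t. (*) (psit' t)"] h
      by (auto simp: has_field_derivative_def)
    have "h * m \<le> h * psit' z" using m(2)[of z] h z(1) by (intro mult_left_mono) auto
    with z(2) \<open>psit 1 = 1\<close> show ?thesis by (simp add: mult.commute)
  qed
  obtain M where M: "\<And>x y. M \<le> \<bar>x\<bar> \<Longrightarrow> 0 \<le> y \<Longrightarrow> y \<le> 1 \<Longrightarrow> \<bar>psi (x, y) - psit y\<bar> < h * m / 2"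
    using far h m by (meson half_gt_zero mult_pos_pos)
  \<comment> \<open>Where psi_y(X,1) \<le> 0, Taylor keeps psi(X,1-h) above 1 - hm/2, but psit(1-h) \<le> 1 - hm.\<close>
  show ?thesis
  proof (rule eventually_at_top_linorderI[of "\<bar>M\<bar>"], rule ccontr)
    fix X assume "\<bar>M\<bar> \<le> X" and "\<not> pdy psi (X, 1) > 0"
    then have "psi (X, 1 - h) \<ge> 1 - C * h\<^sup>2"
      using top_taylor_lower_bound[OF psi top C(2)] h by simp
    moreover have "C * h\<^sup>2 \<le> h * m / 2" using h by (simp add: power2_eq_square)
    moreover have "\<bar>psi (X, 1 - h) - psit (1 - h)\<bar> < h * m / 2"
      using M[of X "1 - h"] \<open>\<bar>M\<bar> \<le> X\<close> h by auto
    ultimately show False using psit_below by arith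
  qed
qed

lemma pdx_neg_on_top:
  assumes psi: "Ckb 2 psi" and top: "\<And>t. psi (t, 1) = 1"
    and vneg: "\<And>t. 0 < t \<Longrightarrow> vel_v psi eta (t, 1) < 0"
    and far_pos: "eventually (\<lambda>t. pdy psi (t, 1) > 0) at_top"
    and "0 < x"
  shows "pdx eta (x, 1) < 0"
proof -
  have diff: "psi differentiable (at (t, 1) within stripClosed)" for t
    using Ckb_2_D(4)[OF psi] by (simp add: stripClosed_def)
  have sign: "pdy psi (t, 1) * pdx eta (t, 1) < 0" if "0 < t" for t
  proof -
    have "gradsq eta (t, 1) \<ge> 0" by (simp add: gradsq_def)
    with vneg[OF that] show ?thesis
      unfolding vel_v_on_top[OF diff top] by (auto simp: divide_less_0_iff)
  qed
  obtain X where "x \<le> X" "pdy psi (X, 1) > 0"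
    using far_pos by (metis eventually_at_top_linorder max.cobounded1 max.cobounded2)
  have "pdy psi (x, 1) > 0"
  proof (rule ccontr)
    assume "\<not> pdy psi (x, 1) > 0"
    moreover have "continuous_on {x..X} (\<lambda>t. pdy psi (t, 1))"
      by (rule continuous_on_compose2[OF Ckb_2_D(3)[OF psi]])
        (auto intro!: continuous_intros simp: stripClosed_def)
    ultimately obtain z where "x \<le> z" "pdy psi (z, 1) = 0"
      using IVT'[of "\<lambda>t. pdy psi (t, 1)" x 0 X] \<open>x \<le> X\<close> \<open>pdy psi (X, 1) > 0\<close> by auto
    then show False using sign[of z] \<open>0 < x\<close> by simp
  qed
  then show ?thesis using sign[OF \<open>0 < x\<close>] by (simp add: mult_less_0_iff)
qed

lemma symmetric_difference_nonpos_on_top: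
  assumes eta: "Ckb 2 eta" and even: "\<And>t. eta (- t, 1) = eta (t, 1)"
    and top: "\<And>t. 0 < t \<Longrightarrow> pdx eta (t, 1) < 0"
    and "0 \<le> x" "0 \<le> h"
  shows "eta (x + h, 1) - eta (x - h, 1) \<le> 0"
proof -
  have deriv: "((\<lambda>t. eta (t, 1)) has_real_derivative pdx eta (t, 1)) (at t)" for t
    using Ckb_2_D(4)[OF eta] by (intro has_real_derivative_pdx) (auto simp: stripClosed_def)
  have "eta (t, 1) \<le> eta (s, 1)" if "0 \<le> s" "s \<le> t" for s t
  proof (rule DERIV_nonpos_imp_decreasing_open[OF \<open>s \<le> t\<close>])
    show "\<exists>y. ((\<lambda>t. eta (t, 1)) has_real_derivative y) (at r) \<and> y \<le> 0" if "s < r" "r < t" for r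
      using deriv top[of r] that \<open>0 \<le> s\<close> by force
    show "continuous_on {s..t} (\<lambda>t. eta (t, 1))"
      using deriv by (meson DERIV_isCont continuous_at_imp_continuous_on)
  qed
  from even_antimono_symmetric_difference_nonpos[where g = "\<lambda>t. eta (t, 1)", OF even this assms(4,5)]
  show ?thesis by simp
qed

lemma symmetric_difference_nonpos:
  assumes eta: "Ckb 2 eta" and harmonic: "\<forall>p\<in>stripR. lap eta p = 0"
    and bottom: "\<And>t. eta (t, 0) = 0"
    and even: "\<And>t y. 0 \<le> y \<Longrightarrow> y \<le> 1 \<Longrightarrow> eta (- t, y) = eta (t, y)"
    and far: "\<forall>e>0. \<exists>M. \<forall>x y. M \<le> \<bar>x\<bar> \<and> 0 \<le> y \<and> y \<le> 1 \<longrightarrow> \<bar>eta (x, y) - y\<bar> < e"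
    and top: "\<And>t h. 0 \<le> t \<Longrightarrow> 0 < h \<Longrightarrow> eta (t + h, 1) - eta (t - h, 1) \<le> 0"
    and "0 \<le> x" "y \<in> {0..1}" "0 < h"
  shows "eta (x + h, y) - eta (x - h, y) \<le> 0"
proof (rule field_le_epsilon)
  fix e :: real
  assume "0 < e"
  then obtain M where M: "\<And>x y. M \<le> \<bar>x\<bar> \<Longrightarrow> 0 \<le> y \<Longrightarrow> y \<le> 1 \<Longrightarrow> \<bar>eta (x, y) - y\<bar> < e / 2"
    using far by (meson half_gt_zero)
  define R where "R = max (\<bar>M\<bar> + h) x"
  have "eta (x + h, y) - eta (x - h, y) \<le> e"
  proof (rule harmonic_difference_barrier_max_principle[OF eta harmonic, where \<epsilon> = 0, simplified mult_zero_left add_0_right])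
    fix x' y' :: real
    assume "x' \<in> {0..R}" "y' \<in> {0..1}" "x' = 0 \<or> x' = R \<or> y' = 0 \<or> y' = 1"
    then consider "x' = 0" | "x' = R" | "y' = 0" | "y' = 1 \<and> 0 \<le> x'" by auto
    then show "eta (x' + h, y') - eta (x' - h, y') \<le> e"
    proof cases
      case 1
      then show ?thesis using even[of y' h] \<open>y' \<in> {0..1}\<close> \<open>0 < e\<close> by simp
    next
      case 2
      then have "M \<le> \<bar>x' + h\<bar>" "M \<le> \<bar>x' - h\<bar>" using \<open>0 < h\<close> by (auto simp: R_def)
      then have "\<bar>eta (x' + h, y') - y'\<bar> < e / 2" "\<bar>eta (x' - h, y') - y'\<bar> < e / 2"
        using M \<open>y' \<in> {0..1}\<close> by auto
      then show ?thesis by arith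
    next
      case 3
      then show ?thesis using bottom \<open>0 < e\<close> by simp
    next
      case 4
      then show ?thesis using top[of x' h] \<open>0 < h\<close> \<open>0 < e\<close> by simp
    qed
  qed (use \<open>0 \<le> x\<close> \<open>y \<in> {0..1}\<close> in \<open>auto simp: R_def\<close>)
  then show "eta (x + h, y) - eta (x - h, y) \<le> 0 + e" by simp
qed

lemma symmetric_difference_le_linear:
  assumes eta: "Ckb 2 eta" and harmonic: "\<forall>p\<in>stripR. lap eta p = 0"
    and bottom: "\<And>t. eta (t, 0) = 0"
    and sym: "\<And>x y h. 0 \<le> x \<Longrightarrow> y \<in> {0..1} \<Longrightarrow> 0 < h \<Longrightarrow> eta (x + h, y) - eta (x - h, y) \<le> 0"
    and top: "\<And>t. 0 < t \<Longrightarrow> pdx eta (t, 1) < 0"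
    and "0 < x" "0 < y" "y < 1"
  obtains c where "c > 0"
    and "\<And>h. 0 < h \<Longrightarrow> h < min (x / 4) 1 \<Longrightarrow> eta (x + h, y) - eta (x - h, y) \<le> 2 * h * - c"
proof -
  \<comment> \<open>The barrier sin(k(t-a)) sinh(ks) vanishes on the vertical sides t = a, x + 1 of the rectangle;
    its weight \<epsilon> is chosen below so that on the top it is absorbed by the decrease 2hm of eta.\<close>
  define a where "a = x / 2"
  define k where "k = pi / (x / 2 + 1)"
  have "k > 0" using \<open>0 < x\<close> by (simp add: k_def)
  have deriv: "((\<lambda>t. eta (t, 1)) has_real_derivative pdx eta (t, 1)) (at t)" for t
    using Ckb_2_D(4)[OF eta] by (intro has_real_derivative_pdx) (auto simp: stripClosed_def)
  have cont: "continuous_on {x / 4..x + 2} (\<lambda>t. pdx eta (t, 1))"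
    by (rule continuous_on_compose2[OF Ckb_2_D(2)[OF eta]])
      (auto intro!: continuous_intros simp: stripClosed_def)
  have "0 < - pdx eta (t, 1)" if "t \<in> {x / 4..x + 2}" for t
    using top[of t] that \<open>0 < x\<close> by simp
  then obtain m where "m > 0" and m: "\<And>t. t \<in> {x / 4..x + 2} \<Longrightarrow> m \<le> - pdx eta (t, 1)"
    using continuous_on_Icc_pos_lower_bound[OF continuous_on_minus[OF cont]] by blast
  have "0 < k * (x - a)" "k * (x - a) < pi"
    using \<open>0 < x\<close> by (auto simp: k_def a_def field_simps)
  then have "sin (k * (x - a)) * sinh (k * y) > 0"
    using \<open>k > 0\<close> \<open>0 < y\<close> by (simp add: sin_gt_zero)
  then have "m * (sin (k * (x - a)) * sinh (k * y)) / sinh k > 0"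
    using \<open>m > 0\<close> \<open>k > 0\<close> by simp
  then show ?thesis
  proof (rule that)
    fix h assume "0 < h" "h < min (x / 4) 1"
    define \<epsilon> where "\<epsilon> = 2 * h * m / sinh k"
    have "\<epsilon> \<ge> 0" "\<epsilon> * sinh k = 2 * h * m"
      using \<open>m > 0\<close> \<open>0 < h\<close> \<open>k > 0\<close> by (auto simp: \<epsilon>_def)
    have "eta (x + h, y) - eta (x - h, y) + \<epsilon> * (sin (k * (x - a)) * sinh (k * y)) \<le> 0"
    proof (rule harmonic_difference_barrier_max_principle[OF eta harmonic, where b = "x + 1"])
      fix x' y' :: real
      assume x': "x' \<in> {a..x + 1}" and "y' \<in> {0..1}" and "x' = a \<or> x' = x + 1 \<or> y' = 0 \<or> y' = 1"
      then consider "x' = a \<or> x' = x + 1" | "y' = 0" | "y' = 1" by auto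
      then show "eta (x' + h, y') - eta (x' - h, y') + \<epsilon> * (sin (k * (x' - a)) * sinh (k * y')) \<le> 0"
      proof cases
        case 1
        then have "k * (x' - a) = 0 \<or> k * (x' - a) = pi"
          using \<open>0 < x\<close> by (auto simp: k_def a_def field_simps)
        then have "sin (k * (x' - a)) = 0" by auto
        then show ?thesis using sym[of x' y' h] x' \<open>y' \<in> {0..1}\<close> \<open>0 < h\<close> \<open>0 < x\<close> by (simp add: a_def)
      next
        case 2
        then show ?thesis using bottom by simp
      next
        case 3
        have "eta (x' + h, 1) - eta (x' - h, 1) \<le> 2 * h * - m"
        proof (rule symmetric_difference_le_if_DERIV_le[OF \<open>0 < h\<close> deriv])
          show "pdx eta (t, 1) \<le> - m" if "x' - h \<le> t" "t \<le> x' + h" for t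
            using m[of t] that x' \<open>h < min (x / 4) 1\<close> by (simp add: a_def)
        qed
        moreover have "\<epsilon> * (sin (k * (x' - a)) * sinh k) \<le> \<epsilon> * sinh k"
          using \<open>\<epsilon> \<ge> 0\<close> \<open>k > 0\<close> by (intro mult_left_mono) auto
        ultimately show ?thesis using 3 \<open>\<epsilon> * sinh k = 2 * h * m\<close> by simp
      qed
    qed (use \<open>0 < x\<close> \<open>0 < y\<close> \<open>y < 1\<close> in \<open>auto simp: a_def\<close>)
    moreover have "\<epsilon> * (sin (k * (x - a)) * sinh (k * y))
        = 2 * h * (m * (sin (k * (x - a)) * sinh (k * y)) / sinh k)"
      using \<open>k > 0\<close> by (simp add: \<epsilon>_def)
    ultimately show "eta (x + h, y) - eta (x - h, y)
        \<le> 2 * h * - (m * (sin (k * (x - a)) * sinh (k * y)) / sinh k)"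
      by simp
  qed
qed

lemma pdx_neg_interior:
  assumes eta: "Ckb 2 eta" and harmonic: "\<forall>p\<in>stripR. lap eta p = 0"
    and bottom: "\<And>t. eta (t, 0) = 0"
    and sym: "\<And>x y h. 0 \<le> x \<Longrightarrow> y \<in> {0..1} \<Longrightarrow> 0 < h \<Longrightarrow> eta (x + h, y) - eta (x - h, y) \<le> 0"
    and top: "\<And>t. 0 < t \<Longrightarrow> pdx eta (t, 1) < 0"
    and "0 < x" "0 < y" "y < 1"
  shows "pdx eta (x, y) < 0"
proof -
  obtain c where "c > 0"
    and c: "\<And>h. 0 < h \<Longrightarrow> h < min (x / 4) 1 \<Longrightarrow> eta (x + h, y) - eta (x - h, y) \<le> 2 * h * - c"
    using symmetric_difference_le_linear[OF assms] by blast
  have "((\<lambda>t. eta (t, y)) has_real_derivative pdx eta (x, y)) (at x)"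
    using Ckb_2_D(4)[OF eta] assms(7,8) by (intro has_real_derivative_pdx) (auto simp: stripClosed_def)
  then have "pdx eta (x, y) \<le> - c"
    by (rule DERIV_le_if_symmetric_difference_le[where d = "min (x / 4) 1", OF _ _ c])
      (use \<open>0 < x\<close> in simp_all)
  with \<open>c > 0\<close> show ?thesis by simp
qed

theorem lemma5p1:
  fixes gam psit psit' :: "real \<Rightarrow> real"
    and psi eta :: "(real \<times> real) \<Rightarrow> real"
    and alpha beta mu :: real
  assumes beta: "0 < beta" "beta < 1"
    and gam: "C21_loc gam"
    and triv_d1: "\<And>t. t \<in> {0..1} \<Longrightarrow> (psit has_real_derivative psit' t) (at t within {0..1})"
    and triv_d2: "\<And>t. t \<in> {0..1} \<Longrightarrow> (psit' has_real_derivative - gam (psit t)) (at t within {0..1})"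
    and triv_bc: "psit 0 = 0" "psit 1 = 1"
    and triv_pos: "\<And>t. t \<in> {0..1} \<Longrightarrow> psit' t > 0"
    and mu: "mu = (psit' 1)\<^sup>2"
    and sol: "solitary_wave gam psit mu beta psi eta alpha"
    and vneg: "\<And>p. p \<in> Gamma_plus \<union> stripR_plus \<Longrightarrow> vel_v psi eta p < 0"
  shows "\<forall>p \<in> Gamma_plus \<union> stripR_plus. pdx eta p < 0"
proof -
  have harmonic: "\<forall>p\<in>stripR. lap eta p = 0"
    and psi_top: "\<And>t. psi (t, 1) = 1" and eta_bottom: "\<And>t. eta (t, 0) = 0"
    and far: "\<forall>e>0. \<exists>M. \<forall>x y. M \<le> \<bar>x\<bar> \<and> 0 \<le> y \<and> y \<le> 1 \<longrightarrow>
      \<bar>psi (x, y) - psit y\<bar> < e \<and> \<bar>eta (x, y) - y\<bar> < e"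
    and "Ckb 3 psi" "Ckb 3 eta"
    and even: "\<And>t y. 0 \<le> y \<Longrightarrow> y \<le> 1 \<Longrightarrow> eta (- t, y) = eta (t, y)"
    using sol by (auto simp: solitary_wave_def C3beta_b_def GammaSet_def BottomSet_def stripClosed_def)
  then have psi: "Ckb 2 psi" and eta: "Ckb 2 eta"
    using Ckb_SucD[of 2] by (simp_all add: numeral_3_eq_3 numeral_2_eq_2)
  have "eventually (\<lambda>t. pdy psi (t, 1) > 0) at_top"
    using far by (intro eventually_pdy_pos_on_top[OF psi psi_top _ triv_d1 triv_bc(2)
        DERIV_continuous_on[OF triv_d2] triv_pos]) blast
  then have top: "\<And>t. 0 < t \<Longrightarrow> pdx eta (t, 1) < 0"
    using pdx_neg_on_top[OF psi psi_top] vneg by (simp add: Gamma_plus_def)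
  have "eta (x + h, y) - eta (x - h, y) \<le> 0" if "0 \<le> x" "y \<in> {0..1}" "0 < h" for x y h
  proof (rule symmetric_difference_nonpos[OF eta harmonic eta_bottom even _ _ that])
    show "\<forall>e>0. \<exists>M. \<forall>x y. M \<le> \<bar>x\<bar> \<and> 0 \<le> y \<and> y \<le> 1 \<longrightarrow> \<bar>eta (x, y) - y\<bar> < e"
      using far by blast
    show "eta (t + h, 1) - eta (t - h, 1) \<le> 0" if "0 \<le> t" "0 < h" for t h
      using symmetric_difference_nonpos_on_top[OF eta _ top] even that by simp
  qed
  with pdx_neg_interior[OF eta harmonic eta_bottom _ top] top
  show ?thesis by (auto simp: Gamma_plus_def stripR_plus_def)
qed

end
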